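(* Let $\lambda$ be a normalized additively alternating $n\times n$ complex matrix of rank $n-1$ with biresidue matrix $b$. Then a relevant weight $\mathbf w\in\mathbb{Z}^n$ is $\lambda$-Poisson-contributing if and only if $\mathbf w$ is a (complex) linear combination of the rows $b_{i\bullet}$ for those $i$ with $w_i=-1$. If, in addition, $\lambda$ is generic, this is equivalent to $\mathbf w$ being $q$-Hochschild-contributing for $q=\operatorname{EExp}(\lambda)$.
   Context: Additively alternating: $\lambda_{ij}=-\lambda_{ji}$; normalized: every row sums to $0$. The biresidue matrix of such $\lambda$ of rank $n-1$ is the unique normalized alternating matrix $b$ with $b|_\Delta=(\lambda|_\Delta)^{-1}$, where $\Delta=\{z\in\mathbb{C}^n:\sum_iz_i=0\}$ (which $\lambda$ maps to itself). $\operatorname{EExp}(\lambda)=(e^{\lambda_{ij}})$. A weight $\mathbf w$ is relevant if $w_i\ge-1$ for all $i$ and $\sum w_i=0$; $\lambda$-Poisson-contributing if $w_i\ge-1$ for all $i$ and $\sum_j\lambda_{ij}w_j=0$ for every $i$ with $w_i\ge0$; $q$-Hochschild-contributing if $w_i\ge-1$ for all $i$ and $\prod_jq_{ij}^{w_j}=1$ for every $i$ with $w_i\ge0$. $\lambda$ is generic if it has rank $n-1$ and every relevant $\operatorname{EExp}(\lambda)$-Hochschild-contributing weight is $\lambda$-Poisson-contributing. *)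

theory Defs
  imports "HOL-Analysis.Analysis"
begin

definition add_alternating :: "complex^'n^'n \<Rightarrow> bool" where
  "add_alternating L \<longleftrightarrow> (\<forall>i j. L$i$j = - L$j$i)"

definition normalized :: "complex^'n^'n \<Rightarrow> bool" where
  "normalized L \<longleftrightarrow> (\<forall>i. (\<Sum>j\<in>UNIV. L$i$j) = 0)"

definition Delta :: "(complex^'n) set" where
  "Delta = {z. (\<Sum>i\<in>UNIV. z$i) = 0}"

definition biresidue :: "complex^'n^'n \<Rightarrow> complex^'n^'n \<Rightarrow> bool" where
  "biresidue L b \<longleftrightarrow> normalized b \<and> add_alternating b \<and>
     (\<forall>z\<in>Delta. b *v (L *v z) = z \<and> L *v (b *v z) = z)"

definition EExp :: "complex^'n^'n \<Rightarrow> complex^'n^'n" where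
  "EExp L = (\<chi> i j. exp (L$i$j))"

definition relevant :: "('n::finite \<Rightarrow> int) \<Rightarrow> bool" where
  "relevant w \<longleftrightarrow> (\<forall>i. w i \<ge> -1) \<and> (\<Sum>i\<in>UNIV. w i) = 0"

definition poisson_contributing :: "complex^'n^'n \<Rightarrow> ('n \<Rightarrow> int) \<Rightarrow> bool" where
  "poisson_contributing L w \<longleftrightarrow> (\<forall>i. w i \<ge> -1) \<and>
     (\<forall>i. w i \<ge> 0 \<longrightarrow> (\<Sum>j\<in>UNIV. L$i$j * of_int (w j)) = 0)"

definition hochschild_contributing :: "complex^'n^'n \<Rightarrow> ('n \<Rightarrow> int) \<Rightarrow> bool" where
  "hochschild_contributing q w \<longleftrightarrow> (\<forall>i. w i \<ge> -1) \<and>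
     (\<forall>i. w i \<ge> 0 \<longrightarrow> (\<Prod>j\<in>UNIV. (q$i$j) powi (w j)) = 1)"

definition generic :: "complex^'n^'n \<Rightarrow> bool" where
  "generic L \<longleftrightarrow> rank L = CARD('n) - 1 \<and>
     (\<forall>w. relevant w \<and> hochschild_contributing (EExp L) w \<longrightarrow> poisson_contributing L w)"

end

theory Submission
  imports Defs
begin

text \<open>Write \<open>S = {i. w i = -1}\<close>. Since \<open>w \<in> \<Delta>\<close> and \<open>b\<close> inverts \<open>\<lambda>\<close> on \<open>\<Delta>\<close>, we have
  \<open>w = b (\<lambda> w) = - (\<lambda> w)\<^sup>T b\<close> by alternation, and \<open>w\<close> is \<open>\<lambda>\<close>-Poisson-contributing exactly when
  \<open>\<lambda> w\<close> vanishes outside \<open>S\<close>; this gives \<open>w\<close> as a combination of the rows \<open>b\<^sub>i\<^sub>\<bullet>\<close>, \<open>i \<in> S\<close>.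
  Conversely, if \<open>w = c\<^sup>T b\<close> with \<open>c\<close> supported on \<open>S\<close>, then \<open>c \<cdot> w = c\<^sup>T b c = 0\<close> by
  alternation, while \<open>c \<cdot> w = - \<Sum> c\<^sub>i\<close> because \<open>w\<close> is \<open>-1\<close> on \<open>S\<close>; hence \<open>c \<in> \<Delta>\<close> and
  \<open>\<lambda> w = - \<lambda> b c = - c\<close> vanishes outside \<open>S\<close>.
  For the second part, \<open>\<Prod>\<^sub>j exp(\<lambda>\<^sub>i\<^sub>j)\<^bsup>w\<^sub>j\<^esup> = exp(\<Sum>\<^sub>j \<lambda>\<^sub>i\<^sub>j w\<^sub>j)\<close>, so Poisson-contributing
  weights are always Hochschild-contributing, and genericity is precisely the converse.\<close>

definition weight_vec :: "('n::finite \<Rightarrow> int) \<Rightarrow> complex^'n" where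
  "weight_vec w = (\<chi> j. of_int (w j))"

lemma weight_vec_in_Delta: "relevant w \<Longrightarrow> weight_vec w \<in> Delta"
  by (simp add: relevant_def Delta_def weight_vec_def flip: of_int_sum)

lemma poisson_contributing_iff_matrix_vector:
  "poisson_contributing L w \<longleftrightarrow>
     (\<forall>i. w i \<ge> -1) \<and> (\<forall>i. w i \<ge> 0 \<longrightarrow> (L *v weight_vec w) $ i = 0)"
  by (simp add: poisson_contributing_def weight_vec_def matrix_vector_mult_def)

lemma poisson_contributing_imp_hochschild_contributing_EExp:
  assumes "poisson_contributing L w"
  shows "hochschild_contributing (EExp L) w"
  unfolding hochschild_contributing_def
proof (intro conjI allI impI)
  fix i
  show "w i \<ge> -1" using assms by (simp add: poisson_contributing_def)
  assume "w i \<ge> 0"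
  then have sum_zero: "(\<Sum>j\<in>UNIV. L$i$j * of_int (w j)) = 0"
    using assms by (simp add: poisson_contributing_def)
  have "(\<Prod>j\<in>UNIV. (EExp L$i$j) powi (w j)) = (\<Prod>j\<in>UNIV. exp (L$i$j * of_int (w j)))"
    by (simp add: EExp_def exp_power_int mult.commute)
  also have "\<dots> = exp (\<Sum>j\<in>UNIV. L$i$j * of_int (w j))"
    by (simp add: exp_sum)
  finally show "(\<Prod>j\<in>UNIV. (EExp L$i$j) powi (w j)) = 1"
    by (simp add: sum_zero)
qed

lemma add_alternating_vector_matrix_mult:
  assumes "add_alternating b"
  shows "x v* b = - (b *v x)"
proof -
  have alt: "b$i$j = - b$j$i" for i j
    using assms unfolding add_alternating_def by blast
  have "(\<Sum>i\<in>UNIV. x$i * b$i$j) = - (\<Sum>i\<in>UNIV. b$j$i * x$i)" for j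
    unfolding sum_negf[symmetric] by (intro sum.cong refl) (simp add: alt[of _ j])
  then show ?thesis
    by (simp add: vec_eq_iff vector_matrix_mult_def matrix_vector_mult_def)
qed

lemma sum_mult_vector_matrix_mult:
  fixes m :: "'a::comm_semiring_1^'n^'m"
  shows "(\<Sum>k\<in>UNIV. x$k * (y v* m)$k) = (\<Sum>k\<in>UNIV. y$k * (m *v x)$k)"
proof -
  have "(\<Sum>k\<in>UNIV. x$k * (y v* m)$k) = (\<Sum>k\<in>UNIV. \<Sum>i\<in>UNIV. x$k * (y$i * m$i$k))"
    by (simp add: vector_matrix_mult_def sum_distrib_left)
  also have "\<dots> = (\<Sum>i\<in>UNIV. \<Sum>k\<in>UNIV. x$k * (y$i * m$i$k))"
    by (rule sum.swap)
  also have "\<dots> = (\<Sum>k\<in>UNIV. y$k * (m *v x)$k)"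
    by (simp add: matrix_vector_mult_def sum_distrib_left ac_simps)
  finally show ?thesis .
qed

lemma add_alternating_form_self_zero:
  fixes b :: "complex^'n^'n"
  assumes "add_alternating b"
  shows "(\<Sum>k\<in>UNIV. x$k * (x v* b)$k) = 0"
proof -
  let ?q = "\<Sum>k\<in>UNIV. x$k * (x v* b)$k"
  have "?q = (\<Sum>k\<in>UNIV. x$k * (b *v x)$k)"
    by (rule sum_mult_vector_matrix_mult)
  moreover have "?q = - (\<Sum>k\<in>UNIV. x$k * (b *v x)$k)"
    by (simp add: add_alternating_vector_matrix_mult[OF assms] sum_negf)
  ultimately show ?thesis
    by simp
qed

lemma matrix_vector_mult_uminus:
  fixes A :: "'a::comm_ring_1^'m^'n"
  shows "A *v (- x) = - (A *v x)"
  by (metis diff_0 matrix_vector_mult_diff_distrib matrix_vector_mult_0_right)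

lemma biresidue_vector_matrix_mult:
  assumes "biresidue L b" and "c \<in> Delta"
  shows "L *v (c v* b) = - c"
proof -
  have "add_alternating b" and "L *v (b *v c) = c"
    using assms by (auto simp: biresidue_def)
  then show ?thesis
    by (simp add: add_alternating_vector_matrix_mult matrix_vector_mult_uminus)
qed

lemma biresidue_row_expansion:
  assumes "biresidue L b" and "x \<in> Delta"
  shows "x = (- (L *v x)) v* b"
proof -
  have "add_alternating b" and "b *v (L *v x) = x"
    using assms by (auto simp: biresidue_def)
  then show ?thesis
    by (simp add: add_alternating_vector_matrix_mult matrix_vector_mult_uminus)
qed

lemma vanishing_outside_iff_row_combination:
  assumes "biresidue L b" and "x \<in> Delta" and "\<forall>k\<in>S. x$k = a" and "a \<noteq> 0"
  shows "(\<forall>k. k \<notin> S \<longrightarrow> (L *v x)$k = 0) \<longleftrightarrow> (\<exists>c. (\<forall>k. k \<notin> S \<longrightarrow> c$k = 0) \<and> x = c v* b)"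
proof
  assume "\<forall>k. k \<notin> S \<longrightarrow> (L *v x)$k = 0"
  then show "\<exists>c. (\<forall>k. k \<notin> S \<longrightarrow> c$k = 0) \<and> x = c v* b"
    using biresidue_row_expansion[OF assms(1,2)] by (intro exI[of _ "- (L *v x)"]) auto
next
  assume "\<exists>c. (\<forall>k. k \<notin> S \<longrightarrow> c$k = 0) \<and> x = c v* b"
  then obtain c where supp: "\<forall>k. k \<notin> S \<longrightarrow> c$k = 0" and x: "x = c v* b"
    by blast
  have "add_alternating b"
    using assms(1) by (simp add: biresidue_def)
  then have "(\<Sum>k\<in>UNIV. c$k * x$k) = 0"
    unfolding x by (rule add_alternating_form_self_zero)
  moreover have "(\<Sum>k\<in>UNIV. c$k * x$k) = a * (\<Sum>k\<in>UNIV. c$k)"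
  proof -
    have termwise: "c$k * x$k = a * c$k" for k
      using supp assms(3) by (cases "k \<in> S") auto
    show ?thesis
      by (simp add: termwise sum_distrib_left)
  qed
  ultimately have "c \<in> Delta"
    using assms(4) by (simp add: Delta_def)
  then show "\<forall>k. k \<notin> S \<longrightarrow> (L *v x)$k = 0"
    using supp by (simp add: x biresidue_vector_matrix_mult[OF assms(1)])
qed

lemma row_combination_iff_vector_matrix_mult:
  fixes m :: "'a::comm_ring_1^'n^'m"
  shows "(\<exists>c. \<forall>j. x$j = (\<Sum>i\<in>S. c i * m$i$j)) \<longleftrightarrow>
    (\<exists>c. (\<forall>i. i \<notin> S \<longrightarrow> c$i = 0) \<and> x = c v* m)"
proof
  assume "\<exists>c. \<forall>j. x$j = (\<Sum>i\<in>S. c i * m$i$j)"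
  then obtain c where c: "\<forall>j. x$j = (\<Sum>i\<in>S. c i * m$i$j)"
    by blast
  define c' where "c' = (\<chi> i. if i \<in> S then c i else 0)"
  have "(c' v* m)$j = (\<Sum>i\<in>UNIV. if i \<in> S then c i * m$i$j else 0)" for j
    by (simp add: c'_def vector_matrix_mult_def; rule sum.cong; simp)
  then have "(c' v* m)$j = (\<Sum>i\<in>S. c i * m$i$j)" for j
    by (simp add: sum.If_cases)
  then show "\<exists>c. (\<forall>i. i \<notin> S \<longrightarrow> c$i = 0) \<and> x = c v* m"
    using c by (intro exI[of _ c']) (simp add: c'_def vec_eq_iff)
next
  assume "\<exists>c. (\<forall>i. i \<notin> S \<longrightarrow> c$i = 0) \<and> x = c v* m"
  then obtain c where "\<forall>i. i \<notin> S \<longrightarrow> c$i = 0" and "x = c v* m"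
    by blast
  then have "\<forall>j. x$j = (\<Sum>i\<in>S. c$i * m$i$j)"
    by (auto simp: vector_matrix_mult_def intro: sum.mono_neutral_right)
  then show "\<exists>c. \<forall>j. x$j = (\<Sum>i\<in>S. c i * m$i$j)"
    by blast
qed

theorem proposition4p9:
  fixes L b :: "complex^'n^'n" and w :: "'n \<Rightarrow> int"
  assumes "normalized L" and "add_alternating L" and "rank L = CARD('n) - 1"
    and "biresidue L b"
    and "relevant w"
  shows "(poisson_contributing L w \<longleftrightarrow>
           (\<exists>c :: 'n \<Rightarrow> complex. \<forall>j. of_int (w j) = (\<Sum>i\<in>{i. w i = -1}. c i * b$i$j)))
       \<and> (generic L \<longrightarrow>
           (poisson_contributing L w \<longleftrightarrow> hochschild_contributing (EExp L) w))"
proof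
  let ?S = "{i. w i = -1}"
  have ge: "\<forall>i. w i \<ge> -1"
    using assms(5) by (simp add: relevant_def)
  have "w k \<ge> 0 \<longleftrightarrow> k \<notin> ?S" for k
    using spec[OF ge, of k] by auto
  then have "poisson_contributing L w \<longleftrightarrow> (\<forall>k. k \<notin> ?S \<longrightarrow> (L *v weight_vec w)$k = 0)"
    using ge by (simp only: poisson_contributing_iff_matrix_vector) blast
  also have "\<dots> \<longleftrightarrow> (\<exists>c. (\<forall>k. k \<notin> ?S \<longrightarrow> c$k = 0) \<and> weight_vec w = c v* b)"
    using assms(4) weight_vec_in_Delta[OF assms(5)]
    by (rule vanishing_outside_iff_row_combination[where a = "-1"]) (simp_all add: weight_vec_def)
  also have "\<dots> \<longleftrightarrow> (\<exists>c. \<forall>j. of_int (w j) = (\<Sum>i\<in>?S. c i * b$i$j))"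
    unfolding row_combination_iff_vector_matrix_mult[symmetric] by (simp add: weight_vec_def)
  finally show "poisson_contributing L w \<longleftrightarrow>
      (\<exists>c :: 'n \<Rightarrow> complex. \<forall>j. of_int (w j) = (\<Sum>i\<in>?S. c i * b$i$j))" .
  show "generic L \<longrightarrow> (poisson_contributing L w \<longleftrightarrow> hochschild_contributing (EExp L) w)"
    using assms(5) poisson_contributing_imp_hochschild_contributing_EExp
    by (auto simp: generic_def)
qed

end
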